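(* In the setting described in the context, assume $\omega_+\neq3\omega_-$, and let $r>0$, $0<\delta<1$ satisfy $$r^2S_*\leq1-\delta.$$ Then $\max_{\|\mathbf z\|\leq r}\|\nabla S\|\leq(1-\delta)r$; consequently $\Phi_{\rm nonres}=\Phi^1_S$ is well defined from $B_{\delta r}$ to $B_r$, and $$\|\Phi_{\rm nonres}(\mathbf z)-\mathbf z\|\leq r^3S_*\ \ (\mathbf z\in B_{\delta r}),\qquad \max_{\|\mathbf z\|\leq\delta r}|R|\leq R_\dagger r^6,$$ where $R:=\mathtt H\circ\Phi_{\rm nonres}-\mathtt N-\bar{\mathtt H}_4$ and $R_\dagger:=\sum_{j=1,2}S^{(j)}\big(2\bar{\mathtt H}_4^{(j)}+\hat{\mathtt G}^{(j)}\big)$ with $\hat{\mathtt G}:=\mathtt G-\bar{\mathtt H}_4$.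
   Context: Let $\mathtt M$ be a real symmetric positive-definite $2\times2$ matrix, $\mathtt K$ a real diagonal positive-definite $2\times 2$ matrix, and $M_3,N_3\in\mathbb R$. Let $\omega_-^2<\omega_+^2$ be the (distinct, positive) eigenvalues of $\mathtt M^{-1}\mathtt K$, $0<\omega_-<\omega_+$, $\boldsymbol\omega:=(\omega_-,\omega_+)$, and let $\mathbf\Phi=\begin{pmatrix}\phi_1^-&\phi_1^+\\ \phi_2^-&\phi_2^+\end{pmatrix}$ be real with $\mathbf\Phi^T\mathtt M\mathbf\Phi=\mathbf I$, $\mathbf\Phi^T\mathtt K\mathbf\Phi=\mathrm{diag}(\omega_-^2,\omega_+^2)$. Let $f(q_1,q_2)=\tfrac14M_3(\phi_1^-q_1+\phi_1^+q_2)^4+\tfrac14N_3(\phi_2^-q_1+\phi_2^+q_2)^4$. On $\mathbb C^2\ni\mathbf z$ set $\mathtt N=\omega_-|z_1|^2+\omega_+|z_2|^2$, $\mathtt G=f\big(\tfrac{z_1+\bar z_1}{\sqrt{2\omega_-}},\tfrac{z_2+\bar z_2}{\sqrt{2\omega_+}}\big)=\sum_{|\boldsymbol\alpha+\boldsymbol\beta|=4}\mathtt G_{\boldsymbol\alpha,\boldsymbol\beta}\mathbf z^{\boldsymbol\alpha}\bar{\mathbf z}^{\boldsymbol\beta}$ ($\boldsymbol\alpha,\boldsymbol\beta\in\mathbb N^2$, $\mathbf z^{\boldsymbol\alpha}=z_1^{\alpha_1}z_2^{\alpha_2}$, $|\boldsymbol\alpha+\boldsymbol\beta|=\alpha_1+\alpha_2+\beta_1+\beta_2$),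 $\mathtt H=\mathtt N+\mathtt G$, $\bar{\mathtt H}_4:=\sum_{|\boldsymbol\alpha|=2}\mathtt G_{\boldsymbol\alpha,\boldsymbol\alpha}|z_1|^{2\alpha_1}|z_2|^{2\alpha_2}$. $S$ is the quartic polynomial with coefficients $S_{\boldsymbol\alpha,\boldsymbol\beta}=\mathrm i\,\mathtt G_{\boldsymbol\alpha,\boldsymbol\beta}/(\boldsymbol\omega\cdot(\boldsymbol\alpha-\boldsymbol\beta))$ for $\boldsymbol\alpha\neq\boldsymbol\beta$, $0$ otherwise; $\Phi^t_S$ is the flow of $\dot z_j=-\mathrm i\partial_{\bar z_j}S$. For a quartic polynomial $P=\sum_{|\boldsymbol\alpha+\boldsymbol\beta|=4}P_{\boldsymbol\alpha,\boldsymbol\beta}\mathbf z^{\boldsymbol\alpha}\bar{\mathbf z}^{\boldsymbol\beta}$, $P^{(j)}:=\sum_{|\boldsymbol\alpha+\boldsymbol\beta|=4}\alpha_j|P_{\boldsymbol\alpha,\boldsymbol\beta}|$ ($j=1,2$) and $P_*:=\max\{P^{(1)},P^{(2)}\}$; in particular $S^{(j)}=\sum_{|\boldsymbol\alpha+\boldsymbol\beta|=4,\boldsymbol\alpha\ne\boldsymbol\beta}\alpha_j|\mathtt G_{\boldsymbol\alpha,\boldsymbol\beta}|/|\boldsymbol\omega\cdot(\boldsymbol\alpha-\boldsymbol\beta)|$ and $S_*=\max\{S^{(1)},S^{(2)}\}$. $\|\mathbf z\|:=\max\{|z_1|,|z_2|\}$, $B_\rho:=\{\|\mathbf z\|\leq\rho\}\subset\mathbb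 C^2$, $\nabla S$ is the gradient with respect to $(\mathbf z,\bar{\mathbf z})$ measured in the max norm. *)

theory Defs
  imports "HOL-Analysis.Analysis"
begin

text \<open>Points of C^2 are pairs (z1, z2). Multi-indices alpha, beta in N^2 are pairs of nats;
  a coefficient of a quartic polynomial in z, conj z is indexed by (alpha, beta).\<close>

type_synonym cpt = "complex \<times> complex"
type_synonym midx = "(nat \<times> nat) \<times> (nat \<times> nat)"

definition idx4 :: "midx set" where
  "idx4 = {((a1,a2),(b1,b2)). a1 + a2 + b1 + b2 = 4}"

definition cnj2 :: "cpt \<Rightarrow> cpt" where
  "cnj2 z = (cnj (fst z), cnj (snd z))"

definition mono :: "cpt \<Rightarrow> nat \<times> nat \<Rightarrow> complex" where
  "mono z a = fst z ^ fst a * snd z ^ snd a"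

definition znorm :: "cpt \<Rightarrow> real" where
  "znorm z = max (cmod (fst z)) (cmod (snd z))"

definition poly4 :: "(midx \<Rightarrow> complex) \<Rightarrow> cpt \<Rightarrow> complex" where
  "poly4 P z = (\<Sum>(a,b)\<in>idx4. P (a,b) * mono z a * mono (cnj2 z) b)"

definition comp :: "nat \<times> nat \<Rightarrow> nat \<Rightarrow> nat" where
  "comp a j = (if j = 1 then fst a else snd a)"

definition dec :: "nat \<times> nat \<Rightarrow> nat \<Rightarrow> nat \<times> nat" where
  "dec a j = (if j = 1 then (fst a - 1, snd a) else (fst a, snd a - 1))"

definition dz :: "(midx \<Rightarrow> complex) \<Rightarrow> nat \<Rightarrow> cpt \<Rightarrow> complex" where
  "dz P j z = (\<Sum>(a,b)\<in>idx4. P (a,b) * of_nat (comp a j) * mono z (dec a j) * mono (cnj2 z) b)"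

definition dzbar :: "(midx \<Rightarrow> complex) \<Rightarrow> nat \<Rightarrow> cpt \<Rightarrow> complex" where
  "dzbar P j z = (\<Sum>(a,b)\<in>idx4. P (a,b) * of_nat (comp b j) * mono z a * mono (cnj2 z) (dec b j))"

definition gradnorm :: "(midx \<Rightarrow> complex) \<Rightarrow> cpt \<Rightarrow> real" where
  "gradnorm P z = max (max (cmod (dz P 1 z)) (cmod (dz P 2 z)))
                      (max (cmod (dzbar P 1 z)) (cmod (dzbar P 2 z)))"

definition pnorm :: "(midx \<Rightarrow> complex) \<Rightarrow> nat \<Rightarrow> real" where
  "pnorm P j = (\<Sum>(a,b)\<in>idx4. real (comp a j) * cmod (P (a,b)))"

definition pstar :: "(midx \<Rightarrow> complex) \<Rightarrow> real" where
  "pstar P = max (pnorm P 1) (pnorm P 2)"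

definition Scoef :: "real \<Rightarrow> real \<Rightarrow> (midx \<Rightarrow> complex) \<Rightarrow> midx \<Rightarrow> complex" where
  "Scoef wm wp Gc ab = (if fst ab \<noteq> snd ab then
      \<i> * Gc ab / complex_of_real (wm * (real (fst (fst ab)) - real (fst (snd ab)))
                                 + wp * (real (snd (fst ab)) - real (snd (snd ab))))
     else 0)"

definition Sfield :: "(midx \<Rightarrow> complex) \<Rightarrow> cpt \<Rightarrow> cpt" where
  "Sfield Sc z = (- \<i> * dzbar Sc 1 z, - \<i> * dzbar Sc 2 z)"

definition flow_sol :: "(midx \<Rightarrow> complex) \<Rightarrow> cpt \<Rightarrow> (real \<Rightarrow> cpt) \<Rightarrow> bool" where
  "flow_sol Sc z x \<longleftrightarrow> x 0 = z \<and>
     (\<forall>t\<in>{0..1}. (x has_vector_derivative Sfield Sc (x t)) (at t within {0..1}))"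

definition fquart :: "real \<Rightarrow> real \<Rightarrow> real \<Rightarrow> real \<Rightarrow> real \<Rightarrow> real \<Rightarrow> complex \<Rightarrow> complex \<Rightarrow> complex" where
  "fquart M3 N3 p1m p1p p2m p2p q1 q2 =
     of_real M3 / 4 * (of_real p1m * q1 + of_real p1p * q2) ^ 4
   + of_real N3 / 4 * (of_real p2m * q1 + of_real p2p * q2) ^ 4"

definition Gfun :: "real \<Rightarrow> real \<Rightarrow> real \<Rightarrow> real \<Rightarrow> real \<Rightarrow> real \<Rightarrow> real \<Rightarrow> real \<Rightarrow> cpt \<Rightarrow> complex" where
  "Gfun M3 N3 p1m p1p p2m p2p wm wp z =
     fquart M3 N3 p1m p1p p2m p2p
       ((fst z + cnj (fst z)) / of_real (sqrt (2 * wm)))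
       ((snd z + cnj (snd z)) / of_real (sqrt (2 * wp)))"

definition Nfun :: "real \<Rightarrow> real \<Rightarrow> cpt \<Rightarrow> real" where
  "Nfun wm wp z = wm * cmod (fst z) ^ 2 + wp * cmod (snd z) ^ 2"

definition Hbar4coef :: "(midx \<Rightarrow> complex) \<Rightarrow> midx \<Rightarrow> complex" where
  "Hbar4coef Gc ab = (if fst ab = snd ab then Gc ab else 0)"

definition Ghatcoef :: "(midx \<Rightarrow> complex) \<Rightarrow> midx \<Rightarrow> complex" where
  "Ghatcoef Gc ab = Gc ab - Hbar4coef Gc ab"

definition Hbar4 :: "(midx \<Rightarrow> complex) \<Rightarrow> cpt \<Rightarrow> complex" where
  "Hbar4 Gc z = (\<Sum>a\<in>{(a1,a2). a1 + a2 = (2::nat)}.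
      Gc (a,a) * of_real (cmod (fst z) ^ (2 * fst a) * cmod (snd z) ^ (2 * snd a)))"

end

theory Submission
  imports Defs
begin

(* G is real valued, so its coefficients are Hermitian, G_{b,a} = cnj G_{a,b}, and so are those of
   S; hence |dS/d(cnj z_j)| = |dS/dz_j| <= S^(j) r^3 on B_r. This bounds the gradient and the vector
   field of S by S_* r^3 <= (1 - delta) r, so Picard iteration gives a unique flow on [0, 1] from
   B_(delta r) that stays in B_r and moves points by at most S_* r^3.
   For the remainder follow phi(t) = N(x t) + Hbar4(x t) + t Ghat(x t) along the flow, which
   interpolates between N + Hbar4 at the start and H = N + G at the end. The homological equation
   {N, S} = -Ghat (solvable since omega_+ <> 3 omega_- excludes resonances of degree 4) cancels the
   derivative of N against Ghat, leaving phi' = {Hbar4, S} + t {Ghat, S}, of modulus at most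
   2 r^6 sum_j S^(j) (Hbar4^(j) + t Ghat^(j)); integrating over [0, 1] gives R_dagger r^6. *)

section \<open>Coefficients of quartic polynomials in z and its conjugate\<close>

lemma infinite_unit_circle: "infinite (sphere (0::complex) 1)"
proof
  assume "finite (sphere (0::complex) 1)"
  moreover have "connected (sphere (0::complex) 1)" by (rule connected_sphere) simp
  ultimately have "sphere (0::complex) 1 = {} \<or> (\<exists>a. sphere (0::complex) 1 = {a})"
    using connected_finite_iff_sing by blast
  moreover have "1 \<in> sphere (0::complex) 1" "-1 \<in> sphere (0::complex) 1" by simp_all
  ultimately show False by (metis empty_iff equals0D singletonD one_neq_neg_one)
qed

lemma poly_vanishing_on_infinite_set:
  fixes c :: "nat \<Rightarrow> 'a::{idom,real_normed_div_algebra}"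
  assumes A: "infinite A" and zero: "\<And>w. w \<in> A \<Longrightarrow> (\<Sum>i\<le>n. c i * w^i) = 0" and i: "i \<le> n"
  shows "c i = 0"
proof (rule ccontr)
  assume "c i \<noteq> 0"
  then have "finite {w. (\<Sum>i\<le>n. c i * w^i) = 0}" using polyfun_finite_roots i by blast
  moreover have "A \<subseteq> {w. (\<Sum>i\<le>n. c i * w^i) = 0}" using zero by blast
  ultimately show False using A finite_subset by blast
qed

text \<open>Homogeneous components vanish by scaling z with a real factor; on the unit circle,
  z^m times the component of degree m is a polynomial in z^2.\<close>

lemma poly_z_cnj_coeffs_eq_0:
  fixes c :: "nat \<Rightarrow> nat \<Rightarrow> complex"
  assumes zero: "\<And>z. (\<Sum>a\<le>N. \<Sum>b\<le>N. c a b * z^a * cnj z^b) = 0" and a: "a \<le> N" and b: "b \<le> N"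
  shows "c a b = 0"
proof -
  define e where "e m u = (\<Sum>a\<le>N. \<Sum>b\<le>N. if a + b = m then c a b * u^a * cnj u^b else 0)" for m u
  have scaled: "(\<Sum>m\<le>2*N. e m u * (of_real t)^m) = 0" for u t
  proof -
    have "(\<Sum>m\<le>2*N. e m u * (of_real t)^m)
        = (\<Sum>m\<le>2*N. \<Sum>a\<le>N. \<Sum>b\<le>N. if a + b = m then c a b * u^a * cnj u^b * (of_real t)^m else 0)"
      unfolding e_def sum_distrib_right by (intro sum.cong refl) simp
    also have "\<dots> = (\<Sum>a\<le>N. \<Sum>b\<le>N. \<Sum>m\<le>2*N. if a + b = m then c a b * u^a * cnj u^b * (of_real t)^m else 0)"
      by (subst sum.swap) (rule sum.cong[OF refl], rule sum.swap)
    also have "\<dots> = (\<Sum>a\<le>N. \<Sum>b\<le>N. c a b * (of_real t * u)^a * cnj (of_real t * u)^b)"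
      by (intro sum.cong refl) (simp add: sum.delta' power_mult_distrib power_add)
    also have "\<dots> = 0" by (rule zero)
    finally show ?thesis .
  qed
  have homogeneous: "e m u = 0" if "m \<le> 2*N" for m u
  proof (rule poly_vanishing_on_infinite_set[OF _ _ that])
    show "infinite (range (of_real :: real \<Rightarrow> complex))"
      using finite_imageD[of "of_real :: real \<Rightarrow> complex" UNIV] inj_of_real infinite_UNIV_char_0 by blast
  qed (use scaled in auto)
  define m where "m = a + b"
  define d where "d i = (if i \<le> m \<and> m - i \<le> N then c i (m - i) else 0)" for i
  have on_circle: "u^m * e m u = (\<Sum>i\<le>N. d i * (u^2)^i)" if "cmod u = 1" for u
  proof -
    have u_cnj: "u * cnj u = 1" using that by (simp add: complex_norm_square[symmetric])
    have "u^m * (c i j * u^i * cnj u^j) = c i j * (u^2)^i" if "i + j = m" for i j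
    proof -
      have "u^m * (c i j * u^i * cnj u^j) = c i j * u^(2*i) * (u * cnj u)^j"
        unfolding that[symmetric] power_add power_mult_distrib mult_2 by (simp add: ac_simps)
      then show ?thesis using u_cnj by (simp add: power_mult)
    qed
    then have "u^m * e m u = (\<Sum>i\<le>N. \<Sum>j\<le>N. if j = m - i \<and> i \<le> m then c i j * (u^2)^i else 0)"
      unfolding e_def sum_distrib_left by (intro sum.cong refl) auto
    also have "\<dots> = (\<Sum>i\<le>N. d i * (u^2)^i)"
      by (intro sum.cong refl) (auto simp: d_def sum.delta')
    finally show ?thesis .
  qed
  have "d a = 0"
  proof (rule poly_vanishing_on_infinite_set[OF infinite_unit_circle])
    fix w :: complex assume "w \<in> sphere 0 1"
    then have "cmod (csqrt w) = 1" by simp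
    moreover have "e m (csqrt w) = 0" using homogeneous a b m_def by simp
    ultimately show "(\<Sum>i\<le>N. d i * w^i) = 0" using on_circle[of "csqrt w"] by simp
  qed (rule a)
  then show ?thesis using a b by (simp add: d_def m_def)
qed

lemma finite_idx4 [simp]: "finite idx4"
  by (rule finite_subset[of _ "({..4}\<times>{..4})\<times>({..4}\<times>{..4})"]) (auto simp: idx4_def)

lemma poly4_as_nested_sum:
  "poly4 D z = (\<Sum>a1\<le>4. \<Sum>b1\<le>4.
     (\<Sum>a2\<le>4. \<Sum>b2\<le>4. (if a1+a2+b1+b2 = 4 then D ((a1,a2),(b1,b2)) else 0) * snd z^a2 * cnj (snd z)^b2)
       * fst z^a1 * cnj (fst z)^b1)"
proof -
  let ?box = "({..4::nat}\<times>{..4::nat})\<times>({..4::nat}\<times>{..4::nat})"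
  let ?g = "\<lambda>p. if p \<in> idx4 then D p * mono z (fst p) * mono (cnj2 z) (snd p) else 0"
  have "poly4 D z = (\<Sum>p\<in>?box. ?g p)"
    unfolding poly4_def case_prod_beta
    by (rule sum.mono_neutral_cong_left) (auto simp: idx4_def)
  also have "\<dots> = (\<Sum>a1\<le>4. \<Sum>a2\<le>4. \<Sum>b1\<le>4. \<Sum>b2\<le>4. ?g ((a1,a2),(b1,b2)))"
    by (simp add: sum.cartesian_product')
  also have "\<dots> = (\<Sum>a1\<le>4. \<Sum>b1\<le>4. \<Sum>a2\<le>4. \<Sum>b2\<le>4. ?g ((a1,a2),(b1,b2)))"
    by (rule sum.cong[OF refl]) (rule sum.swap)
  also have "\<dots> = (\<Sum>a1\<le>4. \<Sum>b1\<le>4.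
     (\<Sum>a2\<le>4. \<Sum>b2\<le>4. (if a1+a2+b1+b2 = 4 then D ((a1,a2),(b1,b2)) else 0) * snd z^a2 * cnj (snd z)^b2)
       * fst z^a1 * cnj (fst z)^b1)"
    unfolding sum_distrib_right by (intro sum.cong refl) (auto simp: idx4_def Defs.mono_def cnj2_def)
  finally show ?thesis .
qed

lemma poly4_eq_0_imp_coeff_eq_0:
  assumes zero: "\<And>z. poly4 D z = 0" and p: "p \<in> idx4"
  shows "D p = 0"
proof -
  define E where "E a1 b1 a2 b2 = (if a1+a2+b1+b2 = 4 then D ((a1,a2),(b1,b2)) else 0)" for a1 b1 a2 b2
  have inner: "(\<Sum>a2\<le>4. \<Sum>b2\<le>4. E a1 b1 a2 b2 * w^a2 * cnj w^b2) = 0"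
    if "a1 \<le> 4" "b1 \<le> 4" for a1 b1 w
  proof (rule poly_z_cnj_coeffs_eq_0[where N=4 and c="\<lambda>a1 b1. \<Sum>a2\<le>4. \<Sum>b2\<le>4. E a1 b1 a2 b2 * w^a2 * cnj w^b2"])
    show "(\<Sum>a\<le>4. \<Sum>b\<le>4. (\<Sum>a2\<le>4. \<Sum>b2\<le>4. E a b a2 b2 * w^a2 * cnj w^b2) * u^a * cnj u^b) = 0" for u
      using zero[of "(u,w)"] unfolding poly4_as_nested_sum E_def by simp
  qed (use that in auto)
  obtain a1 a2 b1 b2 where pe: "p = ((a1,a2),(b1,b2))" by (metis prod.collapse)
  have le: "a1 \<le> 4" "a2 \<le> 4" "b1 \<le> 4" "b2 \<le> 4" and deg: "a1+a2+b1+b2 = 4"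
    using p pe by (auto simp: idx4_def)
  have "E a1 b1 a2 b2 = 0"
    by (rule poly_z_cnj_coeffs_eq_0[where N=4 and c="E a1 b1"]) (use inner le in auto)
  then show ?thesis using deg pe by (simp add: E_def)
qed

definition hermitian :: "(midx \<Rightarrow> complex) \<Rightarrow> bool" where
  "hermitian P \<longleftrightarrow> (\<forall>a b. (a,b) \<in> idx4 \<longrightarrow> P (b,a) = cnj (P (a,b)))"

lemma hermitianD: "hermitian P \<Longrightarrow> (a,b) \<in> idx4 \<Longrightarrow> P (b,a) = cnj (P (a,b))"
  unfolding hermitian_def by blast

lemma swap_mem_idx4: "(b,a) \<in> idx4 \<longleftrightarrow> (a,b) \<in> idx4"
  by (auto simp: idx4_def)

lemma sum_idx4_swap: "(\<Sum>(a,b)\<in>idx4. f a b) = (\<Sum>(a,b)\<in>idx4. f b a)"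
  by (rule sum.reindex_bij_witness[where i="\<lambda>(a,b). (b,a)" and j="\<lambda>(a,b). (b,a)"])
     (auto simp: swap_mem_idx4)

lemma cnj2_cnj2 [simp]: "cnj2 (cnj2 z) = z"
  by (simp add: cnj2_def)

lemma cnj_mono: "cnj (mono z a) = mono (cnj2 z) a"
  by (simp add: Defs.mono_def cnj2_def)

lemma cnj_poly4: "cnj (poly4 P z) = poly4 (\<lambda>(a,b). cnj (P (b,a))) z"
proof -
  have "cnj (poly4 P z) = (\<Sum>(a,b)\<in>idx4. cnj (P (a,b)) * mono (cnj2 z) a * mono z b)"
    unfolding poly4_def by (simp add: case_prod_beta cnj_mono)
  also have "\<dots> = poly4 (\<lambda>(a,b). cnj (P (b,a))) z"
    unfolding poly4_def by (subst sum_idx4_swap) (simp add: case_prod_beta mult_ac)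
  finally show ?thesis .
qed

lemma poly4_diff: "poly4 (\<lambda>p. P p - Q p) z = poly4 P z - poly4 Q z"
  unfolding poly4_def by (simp add: case_prod_beta algebra_simps sum_subtractf)

lemma poly4_add: "poly4 (\<lambda>p. P p + Q p) z = poly4 P z + poly4 Q z"
  unfolding poly4_def by (simp add: case_prod_beta algebra_simps sum.distrib)

lemma hermitian_if_real_valued:
  assumes real: "\<And>z. cnj (poly4 P z) = poly4 P z"
  shows "hermitian P"
  unfolding hermitian_def
proof (intro allI impI)
  fix a b assume ab: "(a,b) \<in> idx4"
  have "poly4 (\<lambda>p. P p - (\<lambda>(a,b). cnj (P (b,a))) p) z = 0" for z
    unfolding poly4_diff cnj_poly4[symmetric] real by simp
  from poly4_eq_0_imp_coeff_eq_0[OF this, of "(b,a)"] ab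
  show "P (b,a) = cnj (P (a,b))" by (simp add: swap_mem_idx4)
qed

lemma cnj_Gfun: "cnj (Gfun M3 N3 p1m p1p p2m p2p wm wp z) = Gfun M3 N3 p1m p1p p2m p2p wm wp z"
  unfolding Gfun_def fquart_def by (simp add: add.commute)

lemma hermitian_Scoef:
  assumes "hermitian Gc"
  shows "hermitian (Scoef wm wp Gc)"
  unfolding hermitian_def
proof (intro allI impI)
  fix a b assume ab: "(a,b) \<in> idx4"
  define D where "D = wm * (real (fst a) - real (fst b)) + wp * (real (snd a) - real (snd b))"
  have "wm * (real (fst b) - real (fst a)) + wp * (real (snd b) - real (snd a)) = - D"
    by (simp add: D_def algebra_simps)
  then show "Scoef wm wp Gc (b,a) = cnj (Scoef wm wp Gc (a,b))"
    using hermitianD[OF assms ab] by (simp add: Scoef_def D_def[symmetric])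
qed

lemma hermitian_Hbar4coef: "hermitian Gc \<Longrightarrow> hermitian (Hbar4coef Gc)"
  unfolding hermitian_def[of "Hbar4coef Gc"]
  by (metis hermitianD Hbar4coef_def complex_cnj_zero fst_conv snd_conv)

lemma hermitian_Ghatcoef: "hermitian Gc \<Longrightarrow> hermitian (Ghatcoef Gc)"
  unfolding hermitian_def[of "Ghatcoef Gc"] Ghatcoef_def
  by (metis hermitianD hermitian_Hbar4coef complex_cnj_diff)

lemma cnj_dzbar:
  assumes "hermitian P"
  shows "cnj (dzbar P j z) = dz P j z"
proof -
  have "cnj (dzbar P j z) = (\<Sum>(a,b)\<in>idx4. cnj (P (a,b)) * of_nat (comp b j) * mono (cnj2 z) a * mono z (dec b j))"
    unfolding dzbar_def by (simp add: case_prod_beta cnj_mono)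
  also have "\<dots> = (\<Sum>(a,b)\<in>idx4. cnj (P (b,a)) * of_nat (comp a j) * mono (cnj2 z) b * mono z (dec a j))"
    by (rule sum_idx4_swap)
  also have "\<dots> = dz P j z"
    unfolding dz_def
  proof (intro sum.cong refl)
    fix p assume "p \<in> idx4"
    moreover obtain a b where "p = (a,b)" by (cases p)
    ultimately show "(case p of (a,b) \<Rightarrow> cnj (P (b,a)) * of_nat (comp a j) * mono (cnj2 z) b * mono z (dec a j))
      = (case p of (a,b) \<Rightarrow> P (a,b) * of_nat (comp a j) * mono z (dec a j) * mono (cnj2 z) b)"
      using hermitianD[OF assms, of b a] by (simp add: swap_mem_idx4)
  qed
  finally show ?thesis .
qed

section \<open>Derivative bounds on the polydisc\<close>

lemma znorm_nonneg: "0 \<le> znorm z"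
  by (simp add: znorm_def le_max_iff_disj)

lemma znorm_cnj2 [simp]: "znorm (cnj2 z) = znorm z"
  by (simp add: znorm_def cnj2_def)

lemma mono_norm_le:
  assumes "znorm z \<le> r"
  shows "cmod (mono z a) \<le> r^(fst a + snd a)"
proof -
  have "0 \<le> r" using assms znorm_nonneg order_trans by blast
  moreover have "cmod (fst z) \<le> r" "cmod (snd z) \<le> r" using assms by (auto simp: znorm_def)
  ultimately have "cmod (fst z)^fst a * cmod (snd z)^snd a \<le> r^fst a * r^snd a"
    by (intro mult_mono power_mono) auto
  then show ?thesis by (simp add: Defs.mono_def norm_mult norm_power power_add)
qed

lemma dz_norm_le:
  assumes z: "znorm z \<le> r"
  shows "cmod (dz P j z) \<le> pnorm P j * r^3"
proof -
  have term_le: "cmod (P (a,b) * of_nat (comp a j) * mono z (dec a j) * mono (cnj2 z) b)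
      \<le> real (comp a j) * cmod (P (a,b)) * r^3" if ab: "(a,b) \<in> idx4" for a b
  proof (cases "comp a j = 0")
    case False
    have "cmod (mono z (dec a j)) * cmod (mono (cnj2 z) b)
        \<le> r^(fst (dec a j) + snd (dec a j)) * r^(fst b + snd b)"
      by (intro mult_mono mono_norm_le) (use z znorm_nonneg[of z] in auto)
    also have "fst (dec a j) + snd (dec a j) + (fst b + snd b) = 3"
      using ab False by (cases a, cases b) (auto simp: idx4_def dec_def Defs.comp_def split: if_splits)
    then have "r^(fst (dec a j) + snd (dec a j)) * r^(fst b + snd b) = r^3"
      by (metis power_add)
    finally have "cmod (mono z (dec a j)) * cmod (mono (cnj2 z) b) \<le> r^3" .
    then have "real (comp a j) * cmod (P (a,b)) * (cmod (mono z (dec a j)) * cmod (mono (cnj2 z) b))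
        \<le> real (comp a j) * cmod (P (a,b)) * r^3"
      by (rule mult_left_mono) simp
    then show ?thesis by (simp add: norm_mult mult_ac)
  qed simp
  have "cmod (dz P j z) \<le> (\<Sum>(a,b)\<in>idx4. cmod (P (a,b) * of_nat (comp a j) * mono z (dec a j) * mono (cnj2 z) b))"
    unfolding dz_def case_prod_beta by (rule norm_sum)
  also have "\<dots> \<le> (\<Sum>(a,b)\<in>idx4. real (comp a j) * cmod (P (a,b)) * r^3)"
    by (rule sum_mono) (use term_le in auto)
  also have "\<dots> = pnorm P j * r^3"
    unfolding pnorm_def sum_distrib_right by (simp add: case_prod_beta)
  finally show ?thesis .
qed

lemma dzbar_norm_le: "hermitian P \<Longrightarrow> znorm z \<le> r \<Longrightarrow> cmod (dzbar P j z) \<le> pnorm P j * r^3"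
  using dz_norm_le cnj_dzbar complex_mod_cnj by metis

lemma pnorm_le_pstar: "pnorm P j \<le> pstar P"
proof (cases "j = 1")
  case False
  then have "pnorm P j = pnorm P 2" by (simp add: pnorm_def Defs.comp_def)
  then show ?thesis by (simp add: pstar_def)
qed (simp add: pstar_def)

lemma gradnorm_le:
  assumes "hermitian P" "znorm z \<le> r"
  shows "gradnorm P z \<le> pstar P * r^3"
proof -
  have "pnorm P j * r^3 \<le> pstar P * r^3" for j
    using assms(2) znorm_nonneg[of z] by (intro mult_right_mono pnorm_le_pstar) auto
  then show ?thesis
    using dz_norm_le[OF assms(2)] dzbar_norm_le[OF assms]
    unfolding gradnorm_def max.bounded_iff by (meson order_trans)
qed

lemma pstar_nonneg: "0 \<le> pstar P"
proof -
  have "0 \<le> pnorm P 1" unfolding pnorm_def by (intro sum_nonneg) auto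
  then show ?thesis using pnorm_le_pstar by (rule order_trans)
qed

lemma znorm_Sfield_le:
  assumes "hermitian P" "znorm z \<le> r"
  shows "znorm (Sfield P z) \<le> pstar P * r^3"
proof -
  have "pnorm P j * r^3 \<le> pstar P * r^3" for j
    using assms(2) znorm_nonneg[of z] by (intro mult_right_mono pnorm_le_pstar) auto
  then show ?thesis
    using dzbar_norm_le[OF assms, of 1] dzbar_norm_le[OF assms, of 2]
    by (auto simp: znorm_def Sfield_def norm_mult intro: order_trans)
qed

section \<open>Lipschitz continuity on compact sets\<close>

definition lipschitzian_on :: "'a::metric_space set \<Rightarrow> ('a \<Rightarrow> 'b::metric_space) \<Rightarrow> bool" where
  "lipschitzian_on K f \<longleftrightarrow> (\<exists>L. L-lipschitz_on K f)"

lemma lipschitzian_on_const: "lipschitzian_on K (\<lambda>x. c)"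
  unfolding lipschitzian_on_def using lipschitz_on_constant by blast

lemma lipschitzian_on_fst: "lipschitzian_on K (\<lambda>x. fst x)"
  unfolding lipschitzian_on_def
  by (rule exI[of _ 1], rule lipschitz_onI) (simp_all add: dist_fst_le)

lemma lipschitzian_on_snd: "lipschitzian_on K (\<lambda>x. snd x)"
  unfolding lipschitzian_on_def
  by (rule exI[of _ 1], rule lipschitz_onI) (simp_all add: dist_snd_le)

lemma lipschitzian_on_cnj: "lipschitzian_on K f \<Longrightarrow> lipschitzian_on K (\<lambda>x. cnj (f x))"
  unfolding lipschitzian_on_def lipschitz_on_def
  by (metis complex_cnj_diff complex_mod_cnj dist_norm)

lemma lipschitzian_on_add:
  fixes f g :: "'a::metric_space \<Rightarrow> 'b::real_normed_vector"
  shows "lipschitzian_on K f \<Longrightarrow> lipschitzian_on K g \<Longrightarrow> lipschitzian_on K (\<lambda>x. f x + g x)"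
  unfolding lipschitzian_on_def using lipschitz_on_add by blast

lemma lipschitzian_on_Pair:
  "lipschitzian_on K f \<Longrightarrow> lipschitzian_on K g \<Longrightarrow> lipschitzian_on K (\<lambda>x. (f x, g x))"
  unfolding lipschitzian_on_def using lipschitz_on_Pair by blast

lemma lipschitzian_on_mult:
  fixes f g :: "'a::metric_space \<Rightarrow> 'b::real_normed_algebra"
  assumes K: "compact K" and f: "lipschitzian_on K f" and g: "lipschitzian_on K g"
  shows "lipschitzian_on K (\<lambda>x. f x * g x)"
proof -
  obtain L M where L: "L-lipschitz_on K f" and M: "M-lipschitz_on K g"
    using f g unfolding lipschitzian_on_def by blast
  have "bounded (f ` K)" "bounded (g ` K)"
    using compact_continuous_image[OF lipschitz_on_continuous_on[OF L] K]
      compact_continuous_image[OF lipschitz_on_continuous_on[OF M] K]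
    by (auto intro: compact_imp_bounded)
  then obtain Bf Bg where Bf: "Bf > 0" "\<And>x. x \<in> K \<Longrightarrow> norm (f x) \<le> Bf"
    and Bg: "Bg > 0" "\<And>x. x \<in> K \<Longrightarrow> norm (g x) \<le> Bg"
    unfolding bounded_pos by auto
  have "(Bf * M + L * Bg)-lipschitz_on K (\<lambda>x. f x * g x)"
  proof (rule lipschitz_onI)
    fix x y assume x: "x \<in> K" and y: "y \<in> K"
    have "dist (f x * g x) (f y * g y) = norm (f x * (g x - g y) + (f x - f y) * g y)"
      by (simp add: dist_norm algebra_simps)
    also have "\<dots> \<le> norm (f x) * norm (g x - g y) + norm (f x - f y) * norm (g y)"
      by (rule order_trans[OF norm_triangle_ineq add_mono[OF norm_mult_ineq norm_mult_ineq]])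
    also have "\<dots> \<le> Bf * (M * dist x y) + (L * dist x y) * Bg"
      using lipschitz_onD[OF L x y] lipschitz_onD[OF M x y] lipschitz_on_nonneg[OF L] Bf Bg x y
      by (intro add_mono mult_mono) (auto simp: dist_norm)
    finally show "dist (f x * g x) (f y * g y) \<le> (Bf * M + L * Bg) * dist x y"
      by (simp add: algebra_simps)
  next
    show "0 \<le> Bf * M + L * Bg"
      using Bf Bg lipschitz_on_nonneg[OF L] lipschitz_on_nonneg[OF M] by simp
  qed
  then show ?thesis unfolding lipschitzian_on_def by blast
qed

lemma lipschitzian_on_power:
  fixes f :: "'a::metric_space \<Rightarrow> 'b::real_normed_algebra_1"
  assumes "compact K" "lipschitzian_on K f"
  shows "lipschitzian_on K (\<lambda>x. f x ^ n)"
  by (induction n) (simp_all add: lipschitzian_on_const lipschitzian_on_mult assms)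

lemma lipschitzian_on_sum:
  fixes f :: "'i \<Rightarrow> 'a::metric_space \<Rightarrow> 'b::real_normed_vector"
  assumes "finite A" "\<And>i. i \<in> A \<Longrightarrow> lipschitzian_on K (f i)"
  shows "lipschitzian_on K (\<lambda>x. \<Sum>i\<in>A. f i x)"
  using assms by (induction A rule: finite_induct) (simp_all add: lipschitzian_on_const lipschitzian_on_add)

lemma lipschitzian_on_Sfield:
  assumes K: "compact K"
  shows "lipschitzian_on K (Sfield P)"
proof -
  have dzbar_eq: "dzbar P j = (\<lambda>u. \<Sum>p\<in>idx4. P p * of_nat (comp (snd p) j)
      * (fst u ^ fst (fst p) * snd u ^ snd (fst p))
      * (cnj (fst u) ^ fst (dec (snd p) j) * cnj (snd u) ^ snd (dec (snd p) j)))" for j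
    unfolding dzbar_def by (simp add: fun_eq_iff case_prod_beta Defs.mono_def cnj2_def)
  have "lipschitzian_on K (dzbar P j)" for j
    unfolding dzbar_eq
    by (intro lipschitzian_on_sum finite_idx4 lipschitzian_on_mult K lipschitzian_on_const
        lipschitzian_on_power lipschitzian_on_fst lipschitzian_on_snd lipschitzian_on_cnj)
  then show ?thesis
    unfolding Sfield_def[abs_def]
    by (intro lipschitzian_on_Pair lipschitzian_on_mult K lipschitzian_on_const)
qed

section \<open>Picard iteration on the time interval [0, 1]\<close>

lemma power_over_fact_tendsto_0: "(\<lambda>n. L^n / fact n :: real) \<longlonglongrightarrow> 0"
proof -
  have "summable (\<lambda>n. L^n /\<^sub>R fact n)" using exp_converges[of L] by (rule sums_summable)
  then show ?thesis using summable_LIMSEQ_zero by (simp add: divide_inverse_commute)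
qed

lemma integral_power_bound:
  fixes f :: "real \<Rightarrow> 'a::banach"
  assumes f: "f integrable_on {0..t}" and t: "0 \<le> t"
    and bound: "\<And>s. s \<in> {0..t} \<Longrightarrow> norm (f s) \<le> C * s^n"
  shows "norm (integral {0..t} f) \<le> C * t^Suc n / Suc n"
proof -
  have "((\<lambda>s. C * s^Suc n / Suc n) has_real_derivative C * (real (Suc n) * s^n) / Suc n) (at s within {0..t})"
    for s :: real
    using DERIV_pow[of "Suc n"] by (intro DERIV_cdivide DERIV_cmult) auto
  then have "((\<lambda>s. C * s^Suc n / Suc n) has_real_derivative C * s^n) (at s within {0..t})" for s :: real
    by simp
  then have "((\<lambda>s. C * s^n) has_integral (C * t^Suc n / Suc n - C * 0^Suc n / Suc n)) {0..t}"
    by (intro fundamental_theorem_of_calculus[OF t]) (simp add: has_real_derivative_iff_has_vector_derivative)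
  then have I: "((\<lambda>s. C * s^n) has_integral (C * t^Suc n / Suc n)) {0..t}" by simp
  have "norm (integral {0..t} f) \<le> integral {0..t} (\<lambda>s. C * s^n)"
    using integral_norm_bound_integral[OF f has_integral_integrable[OF I] bound] .
  then show ?thesis using integral_unique[OF I] by simp
qed

lemma continuous_on_lipschitz_compose:
  "L-lipschitz_on B F \<Longrightarrow> continuous_on S x \<Longrightarrow> x ` S \<subseteq> B \<Longrightarrow> continuous_on S (\<lambda>s. F (x s))"
  by (rule continuous_on_compose2[OF lipschitz_on_continuous_on])

lemma picard_iterates_dist_le:
  fixes F :: "'a::banach \<Rightarrow> 'a" and u v :: "nat \<Rightarrow> real \<Rightarrow> 'a"
  assumes lip: "L-lipschitz_on B F"
    and cont: "\<And>n. continuous_on {0..1} (u n)" "\<And>n. continuous_on {0..1} (v n)"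
    and range: "\<And>n. u n ` {0..1} \<subseteq> B" "\<And>n. v n ` {0..1} \<subseteq> B"
    and picard: "\<And>n t. t \<in> {0..1} \<Longrightarrow> u (Suc n) t = z + integral {0..t} (\<lambda>s. F (u n s))"
      "\<And>n t. t \<in> {0..1} \<Longrightarrow> v (Suc n) t = z + integral {0..t} (\<lambda>s. F (v n s))"
    and init: "\<And>t. t \<in> {0..1} \<Longrightarrow> norm (u 0 t - v 0 t) \<le> M"
    and t: "t \<in> {0..1}"
  shows "norm (u n t - v n t) \<le> M * L^n / fact n * t^n"
  using t
proof (induction n arbitrary: t)
  case 0
  then show ?case using init by simp
next
  case (Suc n)
  have integrable: "(\<lambda>s. F (w s)) integrable_on {0..t}"
    if "continuous_on {0..1} w" "w ` {0..1} \<subseteq> B" for w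
    using Suc.prems continuous_on_lipschitz_compose[OF lip that]
    by (intro integrable_continuous_real) (auto elim: continuous_on_subset)
  have "u (Suc n) t - v (Suc n) t = integral {0..t} (\<lambda>s. F (u n s) - F (v n s))"
    using Suc.prems integral_diff[OF integrable[OF cont(1) range(1)] integrable[OF cont(2) range(2)]]
    by (simp add: picard)
  also have "norm \<dots> \<le> L * (M * L^n / fact n) * t^Suc n / Suc n"
  proof (rule integral_power_bound)
    show "(\<lambda>s. F (u n s) - F (v n s)) integrable_on {0..t}"
      by (intro integrable_diff integrable cont range)
    fix s assume s: "s \<in> {0..t}"
    then have s01: "s \<in> {0..1}" using Suc.prems by auto
    have "norm (F (u n s) - F (v n s)) \<le> L * norm (u n s - v n s)"
      using lipschitz_on_normD[OF lip] range s01 by blast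
    also have "\<dots> \<le> L * (M * L^n / fact n * s^n)"
      using Suc.IH[OF s01] lipschitz_on_nonneg[OF lip] by (rule mult_left_mono)
    finally show "norm (F (u n s) - F (v n s)) \<le> L * (M * L^n / fact n) * s^n"
      by (simp add: mult_ac)
  qed (use Suc.prems in auto)
  also have "L * (M * L^n / fact n) * t^Suc n / Suc n = M * L^Suc n / fact (Suc n) * t^Suc n"
    by (simp add: field_simps)
  finally show ?case .
qed

lemma ode_solution_integral_eq:
  fixes F :: "'a::banach \<Rightarrow> 'a"
  assumes x: "\<forall>s\<in>{0..1}. (x has_vector_derivative F (x s)) (at s within {0..1})" and t: "t \<in> {0..1}"
  shows "x t = x 0 + integral {0..t} (\<lambda>s. F (x s))"
proof -
  have "((\<lambda>s. F (x s)) has_integral (x t - x 0)) {0..t}"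
  proof (rule fundamental_theorem_of_calculus[where f=x and f'="\<lambda>s. F (x s)"])
    show "0 \<le> t" using t by simp
    fix s assume "s \<in> {0..t}"
    then have "(x has_vector_derivative F (x s)) (at s within {0..1})" using x t by auto
    then show "(x has_vector_derivative F (x s)) (at s within {0..t})"
      by (rule has_vector_derivative_within_subset) (use t in auto)
  qed
  then show ?thesis by (simp add: integral_unique)
qed

lemma ode_solution_unique:
  fixes F :: "'a::banach \<Rightarrow> 'a"
  assumes lip: "\<And>K. compact K \<Longrightarrow> lipschitzian_on K F"
    and x: "\<forall>s\<in>{0..1}. (x has_vector_derivative F (x s)) (at s within {0..1})"
    and y: "\<forall>s\<in>{0..1}. (y has_vector_derivative F (y s)) (at s within {0..1})"
    and init: "x 0 = y 0" and t: "t \<in> {0..1}"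
  shows "x t = y t"
proof -
  have cx: "continuous_on {0..1} x" and cy: "continuous_on {0..1} y"
    using x y by (auto intro: continuous_on_vector_derivative)
  define K where "K = x ` {0..1} \<union> y ` {0..1}"
  have "compact K" unfolding K_def using cx cy by (intro compact_Un compact_continuous_image) auto
  then obtain L where L: "L-lipschitz_on K F" using lip unfolding lipschitzian_on_def by blast
  have "bounded ((\<lambda>s. x s - y s) ` {0..1})"
    using cx cy by (intro compact_imp_bounded compact_continuous_image continuous_intros) auto
  then obtain M where M: "\<And>s. s \<in> {0..1} \<Longrightarrow> norm (x s - y s) \<le> M"
    unfolding bounded_iff by blast
  have "norm (x 0 - y 0) \<le> M" using M by simp
  then have M0: "0 \<le> M" by (rule order_trans[OF norm_ge_zero])
  have "norm (x t - y t) \<le> M * L^n / fact n * t^n" for n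
  proof (rule picard_iterates_dist_le[OF L, where u="\<lambda>_. x" and v="\<lambda>_. y" and z="x 0"])
    show "\<And>s. s \<in> {0..1} \<Longrightarrow> x s = x 0 + integral {0..s} (\<lambda>s. F (x s))"
      by (rule ode_solution_integral_eq[OF x])
    show "\<And>s. s \<in> {0..1} \<Longrightarrow> y s = x 0 + integral {0..s} (\<lambda>s. F (y s))"
      unfolding init by (rule ode_solution_integral_eq[OF y])
  qed (use cx cy M t in \<open>auto simp: K_def\<close>)
  also have "\<dots> n \<le> M * L^n / fact n * 1" for n
    using t M0 lipschitz_on_nonneg[OF L] by (intro mult_left_mono power_le_one) auto
  also have "\<dots> n = M * (L^n / fact n)" for n by simp
  finally have "norm (x t - y t) \<le> M * (L^n / fact n)" for n .
  moreover have "(\<lambda>n. M * (L^n / fact n)) \<longlonglongrightarrow> 0"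
    using tendsto_mult_right_zero[OF power_over_fact_tendsto_0] by simp
  ultimately have "norm (x t - y t) \<le> 0"
    by (intro LIMSEQ_le_const) auto
  then show ?thesis by simp
qed

lemma contraction_power_imp_fixpoint:
  fixes T :: "'a::metric_space \<Rightarrow> 'a"
  assumes S: "complete S" "S \<noteq> {}" and T: "T ` S \<subseteq> S" and c: "0 \<le> c" "c < 1"
    and contraction: "\<And>x y. x \<in> S \<Longrightarrow> y \<in> S \<Longrightarrow> dist ((T^^N) x) ((T^^N) y) \<le> c * dist x y"
  shows "\<exists>x\<in>S. T x = x"
proof -
  have TN: "(T^^N) ` S \<subseteq> S" using T by (induction N) auto
  obtain x where x: "x \<in> S" "(T^^N) x = x" and unique: "\<And>y. y \<in> S \<Longrightarrow> (T^^N) y = y \<Longrightarrow> y = x"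
    using Banach_fix[OF S c TN contraction] by metis
  have "(T^^N) (T x) = T x" by (metis funpow_swap1 x(2))
  then have "T x = x" using unique T x(1) by blast
  with x(1) show ?thesis by blast
qed

lemma bcontfun_clamp_01:
  fixes g :: "real \<Rightarrow> 'a::metric_space"
  assumes "continuous_on {0..1} g"
  shows "(\<lambda>t. g (clamp 0 1 t)) \<in> bcontfun"
proof -
  obtain h :: "real \<Rightarrow>\<^sub>C 'a" where "\<And>t. h t = g (clamp 0 1 t)"
    using continuous_on_cbox_bcontfunE[of 0 1 g] assms by auto
  then have "(\<lambda>t. g (clamp 0 1 t)) = apply_bcontfun h" by auto
  then show ?thesis using apply_bcontfun by metis
qed

lemma clamp_01 [simp]: "t \<in> {0..1} \<Longrightarrow> clamp 0 1 t = (t::real)"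
  using clamp_cancel_cbox[of t 0 1] by simp

lemma clamp_01_mem [simp]: "clamp 0 1 t \<in> {0..1::real}"
  using clamp_in_interval[of 0 1 t] by simp

lemma clamp_01_idem [simp]: "clamp 0 1 (clamp 0 1 t) = clamp 0 1 (t::real)"
  by (rule clamp_01[OF clamp_01_mem])

text \<open>The Picard operator, extended to all times by clamping, maps the complete space of bounded
  continuous functions with values in B into itself, and a sufficiently high power of it is a
  contraction; its fixed point solves the equation.\<close>

lemma picard_operator_exists:
  fixes F :: "'a::banach \<Rightarrow> 'a"
  assumes lip: "L-lipschitz_on B F"
    and invariant: "\<And>(x :: real \<Rightarrow> 'a) t. continuous_on {0..1} x \<Longrightarrow> x ` {0..1} \<subseteq> B \<Longrightarrow> t \<in> {0..1}
      \<Longrightarrow> z + integral {0..t} (\<lambda>s. F (x s)) \<in> B"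
  obtains T :: "(real \<Rightarrow>\<^sub>C 'a) \<Rightarrow> real \<Rightarrow>\<^sub>C 'a"
  where "\<And>f. f \<in> PiC UNIV (\<lambda>_. B) \<Longrightarrow> T f \<in> PiC UNIV (\<lambda>_. B)"
    and "\<And>f t. f \<in> PiC UNIV (\<lambda>_. B) \<Longrightarrow> T f t = z + integral {0..clamp 0 1 t} (\<lambda>s. F (f s))"
proof -
  let ?X = "PiC UNIV (\<lambda>_::real. B)"
  have memX: "f \<in> ?X \<longleftrightarrow> (\<forall>t. f t \<in> B)" for f by (auto simp: mem_PiC_iff)
  define P where "P f t = z + integral {0..t} (\<lambda>s. F (apply_bcontfun f s))" for f :: "real \<Rightarrow>\<^sub>C 'a" and t
  define T where "T f = (if f \<in> ?X then Bcontfun (\<lambda>t. P f (clamp 0 1 t)) else f)" for f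
  have T_apply: "T f t = P f (clamp 0 1 t)" if "f \<in> ?X" for f t
  proof -
    have "continuous_on {0..1} (\<lambda>s. F (f s))"
      using that by (intro continuous_on_lipschitz_compose[OF lip]) (auto simp: memX)
    then have "continuous_on {0..1} (P f)"
      unfolding P_def using indefinite_integral_continuous_1[OF integrable_continuous_real]
      by (intro continuous_intros) blast
    then have "(\<lambda>t. P f (clamp 0 1 t)) \<in> bcontfun" by (rule bcontfun_clamp_01)
    then show ?thesis using that by (simp add: T_def Bcontfun_inverse)
  qed
  have T_X: "T f \<in> ?X" if "f \<in> ?X" for f
  proof -
    have "apply_bcontfun f ` {0..1} \<subseteq> B" using that by (auto simp: memX)
    then show ?thesis
      using that invariant[where x="apply_bcontfun f", OF _ _ clamp_01_mem] by (auto simp: memX T_apply P_def)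
  qed
  show thesis by (rule that[of T, OF T_X]) (simp_all add: T_apply P_def)
qed

lemma picard_operator_has_fixpoint:
  fixes F :: "'a::banach \<Rightarrow> 'a" and T :: "(real \<Rightarrow>\<^sub>C 'a) \<Rightarrow> real \<Rightarrow>\<^sub>C 'a"
  assumes B: "closed B" "z \<in> B" and lip: "L-lipschitz_on B F"
    and T_X: "\<And>f. f \<in> PiC UNIV (\<lambda>_. B) \<Longrightarrow> T f \<in> PiC UNIV (\<lambda>_. B)"
    and T_apply: "\<And>f t. f \<in> PiC UNIV (\<lambda>_. B) \<Longrightarrow> T f t = z + integral {0..clamp 0 1 t} (\<lambda>s. F (f s))"
  shows "\<exists>x \<in> PiC UNIV (\<lambda>_. B). T x = x"
proof -
  let ?X = "PiC UNIV (\<lambda>_::real. B)"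
  have memX: "f \<in> ?X \<longleftrightarrow> (\<forall>t. f t \<in> B)" for f by (auto simp: mem_PiC_iff)
  have Tn_X: "(T^^n) f \<in> ?X" if "f \<in> ?X" for n f
    by (induction n) (simp_all add: that T_X)
  have iterates: "norm ((T^^n) f t - (T^^n) h t) \<le> dist f h * L^n / fact n * t^n"
    if "f \<in> ?X" "h \<in> ?X" "t \<in> {0..1}" for f h n t
  proof (rule picard_iterates_dist_le[OF lip, where z=z])
    show "\<And>t. t \<in> {0..1} \<Longrightarrow> norm ((T^^0) f t - (T^^0) h t) \<le> dist f h"
      using dist_bounded[of f _ h] by (simp add: dist_norm)
  qed (use that Tn_X in \<open>auto simp: memX T_apply image_subset_iff\<close>)
  obtain N0 where N0: "\<And>n. n \<ge> N0 \<Longrightarrow> L^n / fact n < 1"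
    using order_tendstoD(2)[OF power_over_fact_tendsto_0[of L], of 1] unfolding eventually_sequentially by auto
  define N where "N = Suc N0"
  have TN_clamp: "(T^^N) f t = (T^^N) f (clamp 0 1 t)" if "f \<in> ?X" for f t
    using T_apply[OF Tn_X[OF that]] by (simp add: N_def)
  have contraction: "dist ((T^^N) f) ((T^^N) h) \<le> L^N / fact N * dist f h"
    if "f \<in> ?X" "h \<in> ?X" for f h
  proof (intro dist_bound)
    fix t
    have "dist ((T^^N) f t) ((T^^N) h t) = dist ((T^^N) f (clamp 0 1 t)) ((T^^N) h (clamp 0 1 t))"
      using TN_clamp that by metis
    also have "\<dots> \<le> dist f h * L^N / fact N * (clamp 0 1 t)^N"
      using iterates[OF that clamp_01_mem] by (simp add: dist_norm)
    also have "\<dots> \<le> dist f h * L^N / fact N * 1"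
      using lipschitz_on_nonneg[OF lip] clamp_01_mem[of t] by (intro mult_left_mono power_le_one) auto
    finally show "dist ((T^^N) f t) ((T^^N) h t) \<le> L^N / fact N * dist f h" by (simp add: mult_ac)
  qed
  have "complete ?X" using B by (intro closed_PiC[THEN complete_eq_closed[THEN iffD2]]) auto
  moreover have "const_bcontfun z \<in> ?X" using B by (simp add: memX const_bcontfun.rep_eq)
  then have "?X \<noteq> {}" by blast
  moreover have "T ` ?X \<subseteq> ?X" using T_X by blast
  moreover have "0 \<le> L^N / fact N" using lipschitz_on_nonneg[OF lip] by simp
  moreover have "L^N / fact N < 1" by (rule N0) (simp add: N_def)
  ultimately show ?thesis
    using contraction_power_imp_fixpoint[where S="?X" and T=T and N=N, OF _ _ _ _ _ contraction] by blast
qed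

lemma ode_solution_exists:
  fixes F :: "'a::banach \<Rightarrow> 'a"
  assumes B: "closed B" "z \<in> B" and lip: "L-lipschitz_on B F"
    and invariant: "\<And>(x :: real \<Rightarrow> 'a) t. continuous_on {0..1} x \<Longrightarrow> x ` {0..1} \<subseteq> B \<Longrightarrow> t \<in> {0..1}
      \<Longrightarrow> z + integral {0..t} (\<lambda>s. F (x s)) \<in> B"
  shows "\<exists>x. x 0 = z \<and> (\<forall>t\<in>{0..1}. (x has_vector_derivative F (x t)) (at t within {0..1}))
    \<and> x ` {0..1} \<subseteq> B"
proof -
  obtain T :: "(real \<Rightarrow>\<^sub>C 'a) \<Rightarrow> real \<Rightarrow>\<^sub>C 'a"
    where T_X: "\<And>f. f \<in> PiC UNIV (\<lambda>_. B) \<Longrightarrow> T f \<in> PiC UNIV (\<lambda>_. B)"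
    and T_apply: "\<And>f t. f \<in> PiC UNIV (\<lambda>_. B) \<Longrightarrow> T f t = z + integral {0..clamp 0 1 t} (\<lambda>s. F (f s))"
    using picard_operator_exists[OF lip invariant] by blast
  from picard_operator_has_fixpoint[OF B lip T_X T_apply]
  obtain x where x: "x \<in> PiC UNIV (\<lambda>_. B)" "T x = x" ..
  then have x_B: "x t \<in> B" for t by (simp add: mem_PiC_iff Pi_iff)
  have sol: "x t = z + integral {0..t} (\<lambda>s. F (x s))" if "t \<in> {0..1}" for t
    using T_apply[OF x(1), of t] by (simp add: x(2) clamp_01[OF that])
  have "continuous_on {0..1} (\<lambda>s. F (x s))"
    using x_B by (intro continuous_on_lipschitz_compose[OF lip]) auto
  then have "((\<lambda>u. z + integral {0..u} (\<lambda>s. F (x s))) has_vector_derivative 0 + F (x t))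
      (at t within {0..1})" if "t \<in> {0..1}" for t
    by (intro has_vector_derivative_add has_vector_derivative_const integral_has_vector_derivative that)
  then have "(apply_bcontfun x has_vector_derivative F (x t)) (at t within {0..1})" if "t \<in> {0..1}" for t
    using that by (intro has_vector_derivative_transform[OF that sol]) simp_all
  moreover have "x 0 = z" using sol[of 0] by simp
  ultimately show ?thesis using x_B by (intro exI[of _ "apply_bcontfun x"]) auto
qed

section \<open>The flow of S\<close>

lemma znorm_add_le: "znorm (u + v) \<le> znorm u + znorm v"
  using norm_triangle_ineq[of "fst u" "fst v"] norm_triangle_ineq[of "snd u" "snd v"]
  by (simp add: znorm_def max_def)

lemma znorm_integral_le:
  fixes g :: "real \<Rightarrow> cpt"
  assumes g: "g integrable_on {0..t}" and t: "0 \<le> t" and bound: "\<And>s. s \<in> {0..t} \<Longrightarrow> znorm (g s) \<le> K"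
  shows "znorm (integral {0..t} g) \<le> K * t"
proof -
  have "cmod (h (integral {0..t} g)) \<le> K * t"
    if h: "bounded_linear h" and h_le: "\<And>w. cmod (h w) \<le> znorm w" for h :: "cpt \<Rightarrow> complex"
  proof -
    have "h (integral {0..t} g) = integral {0..t} (h \<circ> g)" using integral_linear[OF g h] ..
    also have "cmod \<dots> \<le> K * t^Suc 0 / Suc 0"
    proof (rule integral_power_bound[OF integrable_linear[OF g h] t])
      show "cmod ((h \<circ> g) s) \<le> K * s^0" if "s \<in> {0..t}" for s
        using h_le[of "g s"] bound[OF that] by simp
    qed
    finally show ?thesis by simp
  qed
  from this[OF bounded_linear_fst] this[OF bounded_linear_snd] show ?thesis
    by (simp add: znorm_def)
qed

lemma compact_znorm_ball: "compact {w. znorm w \<le> r}"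
  unfolding compact_eq_bounded_closed
proof
  have "norm w \<le> r + r" if "znorm w \<le> r" for w :: cpt
    using norm_Pair_le[of "fst w" "snd w"] that by (simp add: znorm_def)
  then show "bounded {w. znorm w \<le> r}"
    unfolding bounded_iff by blast
  show "closed {w. znorm w \<le> r}"
    unfolding znorm_def by (intro closed_Collect_le continuous_intros)
qed

lemma flow_sol_unique:
  assumes "flow_sol P z x" "flow_sol P z y" "t \<in> {0..1}"
  shows "x t = y t"
  by (rule ode_solution_unique[where F="Sfield P", OF lipschitzian_on_Sfield])
    (use assms in \<open>auto simp: flow_sol_def\<close>)

lemma flow_sol_integral_eq: "flow_sol P z x \<Longrightarrow> t \<in> {0..1} \<Longrightarrow> x t = z + integral {0..t} (\<lambda>s. Sfield P (x s))"
  unfolding flow_sol_def using ode_solution_integral_eq by metis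

lemma flow_sol_exists:
  assumes P: "hermitian P" and r: "0 \<le> r" and z: "znorm z + pstar P * r^3 \<le> r"
  shows "\<exists>x. flow_sol P z x \<and> (\<forall>t\<in>{0..1}. znorm (x t) \<le> r)"
proof -
  define B where "B = {w. znorm w \<le> r}"
  obtain L where L: "L-lipschitz_on B (Sfield P)"
    using lipschitzian_on_Sfield[OF compact_znorm_ball] unfolding lipschitzian_on_def B_def by blast
  have invariant: "z + integral {0..t} (\<lambda>s. Sfield P (x s)) \<in> B"
    if x: "continuous_on {0..1} x" "x ` {0..1} \<subseteq> B" and t: "t \<in> {0..1}" for x :: "real \<Rightarrow> cpt" and t
  proof -
    have "continuous_on {0..t} (\<lambda>s. Sfield P (x s))"
      using continuous_on_lipschitz_compose[OF L x] t by (auto elim: continuous_on_subset)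
    moreover have "znorm (x s) \<le> r" if "s \<in> {0..t}" for s
      using x(2) that t by (auto simp: B_def image_subset_iff)
    ultimately have "znorm (integral {0..t} (\<lambda>s. Sfield P (x s))) \<le> pstar P * r^3 * t"
      using znorm_Sfield_le[OF P] t by (intro znorm_integral_le integrable_continuous_real) auto
    also have "\<dots> \<le> pstar P * r^3"
      using t r pstar_nonneg by (intro mult_right_le_one_le) auto
    finally show ?thesis
      using z znorm_add_le[of z "integral {0..t} (\<lambda>s. Sfield P (x s))"] by (simp add: B_def)
  qed
  have "0 \<le> pstar P * r^3" using pstar_nonneg r by simp
  then have "closed B" "z \<in> B" using compact_znorm_ball[THEN compact_imp_closed] z unfolding B_def by auto
  from ode_solution_exists[OF this L invariant] show ?thesis
    unfolding flow_sol_def B_def by auto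
qed

lemma flow_sol_continuous_field:
  assumes "flow_sol P z x"
  shows "continuous_on {0..1} (\<lambda>s. Sfield P (x s))"
proof -
  have x: "continuous_on {0..1} x"
    using assms unfolding flow_sol_def by (auto intro: continuous_on_vector_derivative)
  then obtain L where "L-lipschitz_on (x ` {0..1}) (Sfield P)"
    using lipschitzian_on_Sfield[OF compact_continuous_image] unfolding lipschitzian_on_def by blast
  from continuous_on_lipschitz_compose[OF this x] show ?thesis by simp
qed

lemma flow_sol_displacement:
  assumes P: "hermitian P" and x: "flow_sol P z x" and r: "\<forall>t\<in>{0..1}. znorm (x t) \<le> r"
  shows "znorm (x 1 - z) \<le> pstar P * r^3"
proof -
  have "znorm (integral {0..1} (\<lambda>s. Sfield P (x s))) \<le> pstar P * r^3 * 1"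
    using znorm_Sfield_le[OF P] r
    by (intro znorm_integral_le integrable_continuous_real flow_sol_continuous_field[OF x]) auto
  then show ?thesis using flow_sol_integral_eq[OF x, of 1] by simp
qed

section \<open>The homological equation and the remainder\<close>

lemma nonresonance_int:
  fixes k1 k2 :: int and wm wp :: real
  assumes small: "\<bar>k1\<bar> + \<bar>k2\<bar> \<le> 4" and parity: "even (k1 + k2)"
    and resonant: "wm * k1 + wp * k2 = 0"
    and w: "0 < wm" "wm < wp" "wp \<noteq> 3 * wm"
  shows "k1 = 0 \<and> k2 = 0"
proof (cases "k2 = 0")
  case True
  then show ?thesis using resonant w by simp
next
  case False
  have abs_eq: "wm * \<bar>k1\<bar> = wp * \<bar>k2\<bar>"
    using arg_cong[OF resonant[unfolded add_eq_0_iff2], of abs] w by (simp add: abs_mult)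
  have "wm * \<bar>k2\<bar> < wp * \<bar>k2\<bar>" using False w by simp
  then have "wm * \<bar>k2\<bar> < wm * \<bar>k1\<bar>" using abs_eq by simp
  then have "\<bar>k2\<bar> < \<bar>k1\<bar>" using w(1) by (simp flip: of_int_abs)
  then have "\<bar>k2\<bar> = 1 \<and> \<bar>k1\<bar> = 3" using small parity False by presburger
  then have "wm * 3 = wp" using abs_eq by (simp flip: of_int_abs)
  then show ?thesis using w by simp
qed

lemma quartic_nonresonance:
  fixes wm wp :: real
  assumes ab: "(a,b) \<in> idx4"
    and resonant: "wm * (real (fst a) - real (fst b)) + wp * (real (snd a) - real (snd b)) = 0"
    and w: "0 < wm" "wm < wp" "wp \<noteq> 3 * wm"
  shows "a = b"
proof -
  obtain a1 a2 b1 b2 where a: "a = (a1,a2)" and b: "b = (b1,b2)" by (cases a, cases b)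
  have deg: "int a1 + int a2 + int b1 + int b2 = 4" using ab by (simp add: idx4_def a b flip: of_nat_add)
  have "int a1 - int b1 = 0 \<and> int a2 - int b2 = 0"
  proof (rule nonresonance_int[OF _ _ _ w])
    show "\<bar>int a1 - int b1\<bar> + \<bar>int a2 - int b2\<bar> \<le> 4" using deg by linarith
    have "int a1 - int b1 + (int a2 - int b2) = 4 - 2 * (int b1 + int b2)" using deg by presburger
    then show "even (int a1 - int b1 + (int a2 - int b2))" by presburger
    show "wm * of_int (int a1 - int b1) + wp * of_int (int a2 - int b2) = 0"
      using resonant by (simp add: a b)
  qed
  then show ?thesis by (simp add: a b)
qed

lemma coord_mult_dz:
  "(if j = 1 then fst w else snd w) * dz P j w
    = (\<Sum>(a,b)\<in>idx4. P (a,b) * of_nat (comp a j) * mono w a * mono (cnj2 w) b)"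
  unfolding dz_def sum_distrib_left
proof (intro sum.cong refl)
  fix p :: midx
  obtain a1 a2 b where "p = ((a1,a2),b)" by (metis prod.collapse)
  then show "(if j = 1 then fst w else snd w) * (case p of (a,b) \<Rightarrow> P (a,b) * of_nat (comp a j) * mono w (dec a j) * mono (cnj2 w) b)
      = (case p of (a,b) \<Rightarrow> P (a,b) * of_nat (comp a j) * mono w a * mono (cnj2 w) b)"
    by (cases a1; cases a2) (simp_all add: Defs.comp_def dec_def Defs.mono_def)
qed

lemma cnj_coord_mult_dzbar:
  "cnj (if j = 1 then fst w else snd w) * dzbar P j w
    = (\<Sum>(a,b)\<in>idx4. P (a,b) * of_nat (comp b j) * mono w a * mono (cnj2 w) b)"
  unfolding dzbar_def sum_distrib_left
proof (intro sum.cong refl)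
  fix p :: midx
  obtain a b1 b2 where "p = (a,(b1,b2))" by (metis prod.collapse)
  then show "cnj (if j = 1 then fst w else snd w) * (case p of (a,b) \<Rightarrow> P (a,b) * of_nat (comp b j) * mono w a * mono (cnj2 w) (dec b j))
      = (case p of (a,b) \<Rightarrow> P (a,b) * of_nat (comp b j) * mono w a * mono (cnj2 w) b)"
    by (cases b1; cases b2) (simp_all add: Defs.comp_def dec_def Defs.mono_def cnj2_def)
qed

text \<open>The homological equation {N, S} = - Ghat, written out along the vector field of S;
  nonresonance makes every non-diagonal denominator of S nonzero.\<close>

lemma Sfield_homological_equation:
  fixes z :: cpt
  assumes G: "hermitian Gc" and w: "0 < wm" "wm < wp" "wp \<noteq> 3 * wm"
  defines "v \<equiv> Sfield (Scoef wm wp Gc) z"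
  shows "of_real wm * (fst v * cnj (fst z) + fst z * cnj (fst v))
       + of_real wp * (snd v * cnj (snd z) + snd z * cnj (snd v)) = - poly4 (Ghatcoef Gc) z"
proof -
  let ?S = "Scoef wm wp Gc"
  have S: "hermitian ?S" by (rule hermitian_Scoef[OF G])
  have "of_real wm * (fst v * cnj (fst z) + fst z * cnj (fst v)) + of_real wp * (snd v * cnj (snd z) + snd z * cnj (snd v))
     = \<i> * (of_real wm * (fst z * dz ?S 1 z) - of_real wm * (cnj (fst z) * dzbar ?S 1 z)
          + of_real wp * (snd z * dz ?S 2 z) - of_real wp * (cnj (snd z) * dzbar ?S 2 z))"
    unfolding v_def Sfield_def using cnj_dzbar[OF S, of 1 z] cnj_dzbar[OF S, of 2 z]
    by (simp add: algebra_simps)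
  also have "\<dots> = (\<Sum>(a,b)\<in>idx4. \<i> * ?S (a,b)
        * (of_real wm * (of_nat (fst a) - of_nat (fst b)) + of_real wp * (of_nat (snd a) - of_nat (snd b)))
        * mono z a * mono (cnj2 z) b)"
  proof -
    have euler: "fst z * dz ?S 1 z = (\<Sum>(a,b)\<in>idx4. ?S (a,b) * of_nat (fst a) * mono z a * mono (cnj2 z) b)"
      "snd z * dz ?S 2 z = (\<Sum>(a,b)\<in>idx4. ?S (a,b) * of_nat (snd a) * mono z a * mono (cnj2 z) b)"
      "cnj (fst z) * dzbar ?S 1 z = (\<Sum>(a,b)\<in>idx4. ?S (a,b) * of_nat (fst b) * mono z a * mono (cnj2 z) b)"
      "cnj (snd z) * dzbar ?S 2 z = (\<Sum>(a,b)\<in>idx4. ?S (a,b) * of_nat (snd b) * mono z a * mono (cnj2 z) b)"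
      using coord_mult_dz[of 1 z ?S] coord_mult_dz[of 2 z ?S]
        cnj_coord_mult_dzbar[of 1 z ?S] cnj_coord_mult_dzbar[of 2 z ?S] by (simp_all add: Defs.comp_def)
    show ?thesis
      unfolding euler sum_distrib_left sum_subtractf[symmetric] sum.distrib[symmetric]
      by (intro sum.cong refl) (auto simp: algebra_simps)
  qed
  also have "\<dots> = (\<Sum>(a,b)\<in>idx4. - Ghatcoef Gc (a,b) * mono z a * mono (cnj2 z) b)"
  proof (intro sum.cong refl, clarify)
    fix a b assume ab: "(a,b) \<in> idx4"
    define D where "D = wm * (real (fst a) - real (fst b)) + wp * (real (snd a) - real (snd b))"
    have "\<i> * ?S (a,b) * complex_of_real D = - Ghatcoef Gc (a,b)"
    proof (cases "a = b")
      case False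
      then have "D \<noteq> 0" using quartic_nonresonance[OF ab _ w] by (auto simp: D_def)
      moreover have "?S (a,b) = \<i> * Gc (a,b) / complex_of_real D"
        using False by (simp add: Scoef_def D_def)
      moreover have "Ghatcoef Gc (a,b) = Gc (a,b)" using False by (simp add: Ghatcoef_def Hbar4coef_def)
      ultimately show ?thesis by simp
    qed (simp add: Scoef_def Ghatcoef_def Hbar4coef_def)
    then show "\<i> * ?S (a,b) * (of_real wm * (of_nat (fst a) - of_nat (fst b)) + of_real wp * (of_nat (snd a) - of_nat (snd b)))
        * mono z a * mono (cnj2 z) b = - Ghatcoef Gc (a,b) * mono z a * mono (cnj2 z) b"
      by (simp add: D_def)
  qed
  also have "\<dots> = - poly4 (Ghatcoef Gc) z"
    unfolding poly4_def by (simp add: case_prod_beta sum_negf)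
  finally show ?thesis .
qed

lemma has_vector_derivative_power:
  fixes f :: "real \<Rightarrow> 'a::real_normed_field"
  assumes "(f has_vector_derivative f') (at t within T)"
  shows "((\<lambda>t. f t ^ n) has_vector_derivative (of_nat n * f t^(n - 1) * f')) (at t within T)"
proof (induction n)
  case (Suc n)
  have "f t * (of_nat n * f t^(n - 1) * f') + f' * f t ^ n = of_nat (Suc n) * f t^(Suc n - 1) * f'"
    by (cases n) (simp_all add: algebra_simps)
  with has_vector_derivative_mult[OF assms Suc] show ?case by simp
qed simp

definition poly4_deriv :: "(midx \<Rightarrow> complex) \<Rightarrow> cpt \<Rightarrow> cpt \<Rightarrow> complex" where
  "poly4_deriv P w v = dz P 1 w * fst v + dzbar P 1 w * cnj (fst v) + dz P 2 w * snd v + dzbar P 2 w * cnj (snd v)"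

lemma poly4_has_vector_derivative:
  assumes x: "(x has_vector_derivative v) (at t within T)"
  shows "((\<lambda>t. poly4 P (x t)) has_vector_derivative poly4_deriv P (x t) v) (at t within T)"
proof -
  have d1: "((\<lambda>t. fst (x t)) has_vector_derivative fst v) (at t within T)"
    and d2: "((\<lambda>t. snd (x t)) has_vector_derivative snd v) (at t within T)"
    using bounded_linear.has_vector_derivative[OF bounded_linear_fst x]
      bounded_linear.has_vector_derivative[OF bounded_linear_snd x] by simp_all
  have poly4_eq: "poly4 P (x t) = (\<Sum>p\<in>idx4. P p * (fst (x t)^fst (fst p) * snd (x t)^snd (fst p))
      * (cnj (fst (x t))^fst (snd p) * cnj (snd (x t))^snd (snd p)))" for t
    unfolding poly4_def by (simp add: case_prod_beta Defs.mono_def cnj2_def)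
  show ?thesis
    unfolding poly4_eq
    apply (rule has_vector_derivative_eq_rhs)
     apply (rule has_vector_derivative_sum has_vector_derivative_mult has_vector_derivative_const
        has_vector_derivative_power d1 d2 has_vector_derivative_cnj)+
    unfolding poly4_deriv_def dz_def dzbar_def sum_distrib_right sum.distrib[symmetric]
    by (intro sum.cong refl) (simp add: case_prod_beta Defs.mono_def cnj2_def dec_def Defs.comp_def algebra_simps)
qed

lemma Nfun_has_vector_derivative:
  assumes x: "(x has_vector_derivative v) (at t within T)"
  shows "((\<lambda>t. complex_of_real (Nfun wm wp (x t))) has_vector_derivative
      of_real wm * (fst v * cnj (fst (x t)) + fst (x t) * cnj (fst v))
    + of_real wp * (snd v * cnj (snd (x t)) + snd (x t) * cnj (snd v))) (at t within T)"
proof -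
  have d1: "((\<lambda>t. fst (x t)) has_vector_derivative fst v) (at t within T)"
    and d2: "((\<lambda>t. snd (x t)) has_vector_derivative snd v) (at t within T)"
    using bounded_linear.has_vector_derivative[OF bounded_linear_fst x]
      bounded_linear.has_vector_derivative[OF bounded_linear_snd x] by simp_all
  have Nfun_eq: "complex_of_real (Nfun wm wp w)
      = of_real wm * (fst w * cnj (fst w)) + of_real wp * (snd w * cnj (snd w))" for w
    unfolding Nfun_def by (simp add: complex_norm_square[symmetric])
  show ?thesis
    unfolding Nfun_eq
    apply (rule has_vector_derivative_eq_rhs)
     apply (rule has_vector_derivative_add has_vector_derivative_mult has_vector_derivative_const
        d1 d2 has_vector_derivative_cnj)+
    by (simp add: algebra_simps)
qed

lemma poly4_deriv_Sfield_norm_le: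
  assumes P: "hermitian P" and S: "hermitian S" and w: "znorm w \<le> r"
  shows "cmod (poly4_deriv P w (Sfield S w)) \<le> 2 * (pnorm P 1 * pnorm S 1 + pnorm P 2 * pnorm S 2) * r^6"
proof -
  let ?v = "Sfield S w"
  have v: "cmod (fst ?v) \<le> pnorm S 1 * r^3" "cmod (snd ?v) \<le> pnorm S 2 * r^3"
    using dzbar_norm_le[OF S w] by (simp_all add: Sfield_def norm_mult)
  have prod_le: "cmod d * cmod u \<le> (pnorm P j * r^3) * c"
    if "cmod d \<le> pnorm P j * r^3" "cmod u \<le> c" for d u :: complex and j c
    using that order_trans[OF norm_ge_zero that(1)] by (intro mult_mono) auto
  have "cmod (poly4_deriv P w ?v)
      \<le> cmod (dz P 1 w) * cmod (fst ?v) + cmod (dzbar P 1 w) * cmod (fst ?v)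
        + cmod (dz P 2 w) * cmod (snd ?v) + cmod (dzbar P 2 w) * cmod (snd ?v)"
  proof -
    have triangle4: "cmod (a + b + c + d) \<le> cmod a + cmod b + cmod c + cmod d" for a b c d :: complex
      using norm_triangle_ineq[of "a + b + c" d] norm_triangle_ineq[of "a + b" c] norm_triangle_ineq[of a b]
      by linarith
    show ?thesis
      unfolding poly4_deriv_def
      using triangle4[of "dz P 1 w * fst ?v" "dzbar P 1 w * cnj (fst ?v)" "dz P 2 w * snd ?v" "dzbar P 2 w * cnj (snd ?v)"]
      by (simp only: norm_mult complex_mod_cnj)
  qed
  also have "\<dots> \<le> (pnorm P 1 * r^3) * (pnorm S 1 * r^3) + (pnorm P 1 * r^3) * (pnorm S 1 * r^3)
      + (pnorm P 2 * r^3) * (pnorm S 2 * r^3) + (pnorm P 2 * r^3) * (pnorm S 2 * r^3)"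
    by (intro add_mono prod_le dz_norm_le dzbar_norm_le P w v)
  also have "\<dots> = 2 * (pnorm P 1 * pnorm S 1 + pnorm P 2 * pnorm S 2) * r^6"
    by (simp add: algebra_simps flip: power_add)
  finally show ?thesis .
qed

lemma Hbar4_eq_poly4: "Hbar4 Gc w = poly4 (Hbar4coef Gc) w"
proof -
  define A where "A = {(a1,a2). a1 + a2 = (2::nat)}"
  have "poly4 (Hbar4coef Gc) w = (\<Sum>p\<in>idx4. Hbar4coef Gc p * mono w (fst p) * mono (cnj2 w) (snd p))"
    unfolding poly4_def by (simp add: case_prod_beta)
  also have "\<dots> = (\<Sum>p\<in>(\<lambda>a. (a,a)) ` A. Hbar4coef Gc p * mono w (fst p) * mono (cnj2 w) (snd p))"
    by (rule sum.mono_neutral_right[OF finite_idx4]) (auto simp: idx4_def A_def Hbar4coef_def)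
  also have "\<dots> = (\<Sum>a\<in>A. Gc (a,a) * mono w a * mono (cnj2 w) a)"
    by (subst sum.reindex) (auto simp: inj_on_def Hbar4coef_def)
  also have "\<dots> = Hbar4 Gc w"
    unfolding Hbar4_def A_def
  proof (intro sum.cong refl)
    have sq: "u ^ k * cnj u ^ k = complex_of_real (cmod u ^ (2 * k))" for k and u :: complex
      by (simp add: power_mult_distrib[symmetric] complex_norm_square[symmetric] power_mult)
    fix a show "Gc (a,a) * mono w a * mono (cnj2 w) a
        = Gc (a,a) * complex_of_real (cmod (fst w) ^ (2 * fst a) * cmod (snd w) ^ (2 * snd a))"
      using sq[of "fst w" "fst a"] sq[of "snd w" "snd a"] by (simp add: Defs.mono_def cnj2_def mult_ac)
  qed
  finally show ?thesis by simp
qed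

lemma norm_diff_le_affine_derivative_bound:
  fixes f :: "real \<Rightarrow> 'a::real_normed_vector"
  assumes f': "\<And>t. t \<in> {0..1} \<Longrightarrow> (f has_vector_derivative f' t) (at t within {0..1})"
    and bound: "\<And>t. t \<in> {0..1} \<Longrightarrow> norm (f' t) \<le> A + B * t"
  shows "norm (f 1 - f 0) \<le> A + B / 2"
proof -
  have "norm (f 1 - f 0) \<le> (A * 1 + B * 1^2 / 2) - (A * 0 + B * 0^2 / 2)"
  proof (rule differentiable_bound_general[where \<phi>="\<lambda>t. A * t + B * t^2 / 2" and \<phi>'="\<lambda>t. A + B * t"])
    show "continuous_on {0..1} f" using f' by (rule continuous_on_vector_derivative)
    show "continuous_on {0..1} (\<lambda>t::real. A * t + B * t^2 / 2)" by (intro continuous_intros) auto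
    fix t :: real assume t: "0 < t" "t < 1"
    show "(f has_vector_derivative f' t) (at t)"
      using f'[of t] t by (simp add: at_within_Icc_at)
    show "norm (f' t) \<le> A + B * t" using bound t by simp
    have "((\<lambda>t. A * t + B * t^2 / 2) has_real_derivative A * 1 + B * (real 2 * t^(2 - Suc 0)) / 2) (at t)"
      by (intro DERIV_add DERIV_cmult DERIV_cdivide DERIV_ident DERIV_pow)
    then show "((\<lambda>t. A * t + B * t^2 / 2) has_vector_derivative A + B * t) (at t)"
      by (simp add: has_real_derivative_iff_has_vector_derivative)
  qed simp
  then show ?thesis by simp
qed

lemma flow_sol_remainder_bound:
  assumes G: "hermitian Gc" and w: "0 < wm" "wm < wp" "wp \<noteq> 3 * wm"
    and x: "flow_sol (Scoef wm wp Gc) z x" and xr: "\<forall>t\<in>{0..1}. znorm (x t) \<le> r"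
  shows "cmod (complex_of_real (Nfun wm wp (x 1)) + poly4 Gc (x 1)
      - complex_of_real (Nfun wm wp z) - Hbar4 Gc z)
    \<le> (\<Sum>j\<in>{1,2}. pnorm (Scoef wm wp Gc) j * (2 * pnorm (Hbar4coef Gc) j + pnorm (Ghatcoef Gc) j)) * r^6"
proof -
  let ?S = "Scoef wm wp Gc" and ?H = "Hbar4coef Gc" and ?G = "Ghatcoef Gc"
  define A where "A = 2 * (pnorm ?H 1 * pnorm ?S 1 + pnorm ?H 2 * pnorm ?S 2) * r^6"
  define B where "B = 2 * (pnorm ?G 1 * pnorm ?S 1 + pnorm ?G 2 * pnorm ?S 2) * r^6"
  define \<phi> where "\<phi> t = complex_of_real (Nfun wm wp (x t)) + poly4 ?H (x t) + t *\<^sub>R poly4 ?G (x t)" for t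
  define D where "D t = poly4_deriv ?H (x t) (Sfield ?S (x t)) + t *\<^sub>R poly4_deriv ?G (x t) (Sfield ?S (x t))" for t
  have "(\<phi> has_vector_derivative D t) (at t within {0..1})" if t: "t \<in> {0..1}" for t
  proof -
    have xd: "(x has_vector_derivative Sfield ?S (x t)) (at t within {0..1})"
      using x t unfolding flow_sol_def by blast
    have "(\<phi> has_vector_derivative - poly4 ?G (x t) + poly4_deriv ?H (x t) (Sfield ?S (x t))
        + (t *\<^sub>R poly4_deriv ?G (x t) (Sfield ?S (x t)) + 1 *\<^sub>R poly4 ?G (x t))) (at t within {0..1})"
      unfolding \<phi>_def
      using Nfun_has_vector_derivative[OF xd, of wm wp] Sfield_homological_equation[OF G w, of "x t"]
      by (intro has_vector_derivative_add has_vector_derivative_scaleR[OF DERIV_ident]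
          poly4_has_vector_derivative[OF xd]) simp_all
    then show ?thesis by (simp add: D_def)
  qed
  moreover have "norm (D t) \<le> A + B * t" if t: "t \<in> {0..1}" for t
  proof -
    have bracket: "cmod (poly4_deriv P (x t) (Sfield ?S (x t)))
        \<le> 2 * (pnorm P 1 * pnorm ?S 1 + pnorm P 2 * pnorm ?S 2) * r^6" if "hermitian P" for P
      using poly4_deriv_Sfield_norm_le[OF that hermitian_Scoef[OF G]] xr t by blast
    have "norm (D t) \<le> cmod (poly4_deriv ?H (x t) (Sfield ?S (x t))) + t * cmod (poly4_deriv ?G (x t) (Sfield ?S (x t)))"
      unfolding D_def using norm_triangle_ineq t by (metis abs_of_nonneg atLeastAtMost_iff norm_scaleR)
    also have "\<dots> \<le> A + t * B"
      unfolding A_def B_def using t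
      by (intro add_mono mult_left_mono bracket hermitian_Hbar4coef hermitian_Ghatcoef G) auto
    finally show ?thesis by (simp add: mult.commute)
  qed
  ultimately have "norm (\<phi> 1 - \<phi> 0) \<le> A + B / 2"
    by (rule norm_diff_le_affine_derivative_bound)
  moreover have "\<phi> 1 - \<phi> 0 = complex_of_real (Nfun wm wp (x 1)) + poly4 Gc (x 1)
      - complex_of_real (Nfun wm wp z) - Hbar4 Gc z"
    using poly4_add[of ?H ?G "x 1"] x
    by (simp add: \<phi>_def Ghatcoef_def Hbar4_eq_poly4 flow_sol_def)
  moreover have "A + B / 2 = (\<Sum>j\<in>{1,2}. pnorm ?S j * (2 * pnorm ?H j + pnorm ?G j)) * r^6"
    by (simp add: A_def B_def algebra_simps)
  ultimately show ?thesis by simp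
qed

lemma Scoef_flow_estimates:
  assumes G: "hermitian Gc" and w: "0 < wm" "wm < wp" "wp \<noteq> 3 * wm"
    and r: "0 \<le> r" and z: "znorm z + pstar (Scoef wm wp Gc) * r^3 \<le> r"
  defines "S \<equiv> Scoef wm wp Gc"
  shows "(\<exists>x. flow_sol S z x)
    \<and> (\<forall>x y. flow_sol S z x \<longrightarrow> flow_sol S z y \<longrightarrow> (\<forall>t\<in>{0..1}. x t = y t))
    \<and> (\<forall>x. flow_sol S z x \<longrightarrow> (\<forall>t\<in>{0..1}. znorm (x t) \<le> r)
        \<and> znorm (x 1 - z) \<le> r^3 * pstar S
        \<and> cmod (complex_of_real (Nfun wm wp (x 1)) + poly4 Gc (x 1)
            - complex_of_real (Nfun wm wp z) - Hbar4 Gc z)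
          \<le> (\<Sum>j\<in>{1,2}. pnorm S j * (2 * pnorm (Hbar4coef Gc) j + pnorm (Ghatcoef Gc) j)) * r^6)"
proof -
  have S: "hermitian S" unfolding S_def by (rule hermitian_Scoef[OF G])
  obtain x0 where x0: "flow_sol S z x0" "\<forall>t\<in>{0..1}. znorm (x0 t) \<le> r"
    using flow_sol_exists[OF S r] z unfolding S_def by blast
  have "\<forall>t\<in>{0..1}. znorm (x t) \<le> r" if "flow_sol S z x" for x
    using x0 flow_sol_unique[OF that x0(1)] by auto
  then show ?thesis
    using x0(1) flow_sol_unique flow_sol_displacement[OF S] flow_sol_remainder_bound[OF G w]
    unfolding S_def by (auto simp: mult.commute)
qed

theorem corollary4p4:
  fixes M K Phi :: "real^2^2" and M3 N3 wm wp r \<delta> :: real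
    and Gc :: "midx \<Rightarrow> complex"
  assumes M_sym: "transpose M = M"
    and M_pd: "\<And>v. v \<noteq> 0 \<Longrightarrow> v \<bullet> (M *v v) > 0"
    and K_diag: "\<And>i j. i \<noteq> j \<Longrightarrow> K $ i $ j = 0"
    and K_pd: "\<And>i. K $ i $ i > 0"
    and w_pos: "0 < wm" and w_less: "wm < wp"
    and eig_m: "\<exists>v. v \<noteq> 0 \<and> (matrix_inv M ** K) *v v = (wm^2) *\<^sub>R v"
    and eig_p: "\<exists>v. v \<noteq> 0 \<and> (matrix_inv M ** K) *v v = (wp^2) *\<^sub>R v"
    and Phi_M: "transpose Phi ** M ** Phi = mat 1"
    and Phi_K: "transpose Phi ** K ** Phi =
                 (\<chi> i j. if i = j then (if i = 1 then wm^2 else wp^2) else 0)"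
    and G_coef: "\<And>z. Gfun M3 N3 (Phi$1$1) (Phi$1$2) (Phi$2$1) (Phi$2$2) wm wp z = poly4 Gc z"
    and nonres: "wp \<noteq> 3 * wm"
    and r_pos: "r > 0" and d_pos: "0 < \<delta>" and d_less: "\<delta> < 1"
    and small: "r^2 * pstar (Scoef wm wp Gc) \<le> 1 - \<delta>"
  shows "(\<forall>z. znorm z \<le> r \<longrightarrow> gradnorm (Scoef wm wp Gc) z \<le> (1 - \<delta>) * r)
    \<and> (\<forall>z. znorm z \<le> \<delta> * r \<longrightarrow>
          (\<exists>x. flow_sol (Scoef wm wp Gc) z x)
        \<and> (\<forall>x y. flow_sol (Scoef wm wp Gc) z x \<longrightarrow> flow_sol (Scoef wm wp Gc) z y
               \<longrightarrow> (\<forall>t\<in>{0..1}. x t = y t))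
        \<and> (\<forall>x. flow_sol (Scoef wm wp Gc) z x \<longrightarrow>
              (\<forall>t\<in>{0..1}. znorm (x t) \<le> r)
            \<and> znorm (x 1 - z) \<le> r^3 * pstar (Scoef wm wp Gc)
            \<and> cmod (complex_of_real (Nfun wm wp (x 1))
                     + Gfun M3 N3 (Phi$1$1) (Phi$1$2) (Phi$2$1) (Phi$2$2) wm wp (x 1)
                     - complex_of_real (Nfun wm wp z) - Hbar4 Gc z)
                \<le> (\<Sum>j\<in>{1,2}. pnorm (Scoef wm wp Gc) j
                      * (2 * pnorm (Hbar4coef Gc) j + pnorm (Ghatcoef Gc) j)) * r^6))"
proof -
  have G: "hermitian Gc"
    using G_coef cnj_Gfun by (intro hermitian_if_real_valued) metis
  have field_le: "pstar (Scoef wm wp Gc) * r^3 \<le> (1 - \<delta>) * r"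
    using mult_left_mono[OF small, of r] r_pos by (simp add: power3_eq_cube power2_eq_square mult_ac)
  have "gradnorm (Scoef wm wp Gc) z \<le> (1 - \<delta>) * r" if "znorm z \<le> r" for z
    using gradnorm_le[OF hermitian_Scoef[OF G, of wm wp] that] field_le by linarith
  moreover have "znorm z + pstar (Scoef wm wp Gc) * r^3 \<le> r" if "znorm z \<le> \<delta> * r" for z
    using that field_le by (simp add: algebra_simps)
  ultimately show ?thesis
    using Scoef_flow_estimates[OF G w_pos w_less nonres less_imp_le[OF r_pos]] unfolding G_coef by blast
qed

end
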